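(* Let $\mathcal A\in\mathbb C^{n_1\times n_1\times n_3}$ with $\mathrm{ind}(\mathcal A)=k$ and let $\mathcal A^-$ be a fixed element of $\mathcal A\{1\}$. Then: (a) $\mathcal A^{-,D}\mathcal A=\mathcal A^-\mathcal A$ if and only if $\mathcal A\mathcal A^D\mathcal A=\mathcal A$; (b) $\mathcal A^{-,D}\mathcal A=\mathcal A^D\mathcal A$ if and only if $\mathcal A^{-,D}=\mathcal A^D$; (c) $\mathcal A^k\mathcal A^-\mathcal A^k=\mathcal A^k$ if and only if $\mathcal A^k\mathcal A^{-,D}\mathcal A^k=\mathcal A^k$; (d) $\mathcal A^{-,D}=\mathcal A^D$ if and only if $\mathcal A^{-,D}\mathcal A=\mathcal A\mathcal A^{-,D}$.
   Context: Fix a nonsingular matrix $M\in\mathbb C^{n_3\times n_3}$. For $\mathcal C\in\mathbb C^{n_1\times n_2\times n_3}$ let $\widehat{\mathcal C}=\mathcal C\times_3M$, i.e. $\widehat{\mathcal C}_{ijk}=\sum_{l=1}^{n_3}M_{kl}\mathcal C_{ijl}$, and let $\widehat{\mathcal C}^{(i)}$ denote its $i$-th frontal slice. The M-product $\mathcal C\star_M\mathcal D$ of $\mathcal C\in\mathbb C^{n_1\times n_2\times n_3}$ and $\mathcal D\in\mathbb C^{n_2\times l\times n_3}$ is the unique tensor with $\widehat{\mathcal C\star_M\mathcal D}^{(i)}=\widehat{\mathcal C}^{(i)}\widehat{\mathcal D}^{(i)}$ for all $i\in[n_3]$. Juxtaposition of tensors denotes the M-product; powers are M-product powers with $\mathcal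 A^0=\mathcal I$ where $\widehat{\mathcal I}^{(i)}=I_{n_1}$. $\mathcal A\{1\}$ is the set of all $\mathcal W$ with $\mathcal A\mathcal W\mathcal A=\mathcal A$. The index $\mathrm{ind}(\mathcal A)$ is $\max_{i}\mathrm{ind}(\widehat{\mathcal A}^{(i)})$, where the index of a square matrix $B$ is the least $k\ge0$ with $\mathrm{rank}(B^{k+1})=\mathrm{rank}(B^k)$. For $\mathrm{ind}(\mathcal A)=k$, the Drazin inverse $\mathcal A^D$ is the unique $\mathcal W$ with $\mathcal W\mathcal A^{k+1}=\mathcal A^k$, $\mathcal W\mathcal A\mathcal W=\mathcal W$, $\mathcal A\mathcal W=\mathcal W\mathcal A$. The 1-D inverse is $\mathcal A^{-,D}=\mathcal A^-\mathcal A\mathcal A^D$. *)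

theory Defs
  imports "HOL-Analysis.Analysis"
begin

text \<open>Third-order tensors in C^(n x n x p): a tensor is the family of its frontal
  slices, C $ l $ i $ j = C_ijl. Only square frontal slices (n1 = n2 = n) are needed.\<close>

type_synonym ('n, 'p) tensor = "complex ^ 'n ^ 'n ^ 'p"

text \<open>Mode-3 product with M: hat C_ijk = sum_l M_kl C_ijl.\<close>
definition that :: "complex ^ 'p ^ 'p \<Rightarrow> ('n::finite, 'p::finite) tensor \<Rightarrow> ('n, 'p) tensor" where
  "that M C = (\<chi> k i j. \<Sum>l\<in>UNIV. M $ k $ l * C $ l $ i $ j)"

definition mprod :: "complex ^ 'p ^ 'p \<Rightarrow> ('n::finite, 'p::finite) tensor \<Rightarrow> ('n, 'p) tensor \<Rightarrow> ('n, 'p) tensor" where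
  "mprod M C D = (THE E. \<forall>k. that M E $ k = that M C $ k ** that M D $ k)"

definition tid :: "complex ^ 'p ^ 'p \<Rightarrow> ('n::finite, 'p::finite) tensor" where
  "tid M = (THE E. \<forall>k. that M E $ k = mat 1)"

primrec tpow :: "complex ^ 'p ^ 'p \<Rightarrow> ('n::finite, 'p::finite) tensor \<Rightarrow> nat \<Rightarrow> ('n, 'p) tensor" where
  "tpow M A 0 = tid M"
| "tpow M A (Suc m) = mprod M (tpow M A m) A"

primrec mpow :: "complex ^ 'n ^ 'n \<Rightarrow> nat \<Rightarrow> complex ^ 'n ^ 'n" where
  "mpow B 0 = mat 1"
| "mpow B (Suc m) = mpow B m ** B"

definition mind :: "complex ^ 'n ^ 'n \<Rightarrow> nat" where
  "mind B = (LEAST k. rank (mpow B (Suc k)) = rank (mpow B k))"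

definition tind :: "complex ^ 'p ^ 'p \<Rightarrow> ('n::finite, 'p::finite) tensor \<Rightarrow> nat" where
  "tind M A = Max (range (\<lambda>i. mind (that M A $ i)))"

definition tdrazin :: "complex ^ 'p ^ 'p \<Rightarrow> ('n::finite, 'p::finite) tensor \<Rightarrow> ('n, 'p) tensor" where
  "tdrazin M A = (THE W. mprod M W (tpow M A (Suc (tind M A))) = tpow M A (tind M A)
                    \<and> mprod M (mprod M W A) W = W \<and> mprod M A W = mprod M W A)"

definition tinner :: "complex ^ 'p ^ 'p \<Rightarrow> ('n::finite, 'p::finite) tensor \<Rightarrow> ('n, 'p) tensor set" where
  "tinner M A = {W. mprod M (mprod M A W) A = A}"

definition t1D :: "complex ^ 'p ^ 'p \<Rightarrow> ('n::finite, 'p::finite) tensor \<Rightarrow> ('n, 'p) tensor \<Rightarrow> ('n, 'p) tensor" where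
  "t1D M A Am = mprod M (mprod M Am A) (tdrazin M A)"

end

theory Submission
  imports Defs
begin

(* Since M is invertible, C \<mapsto> C \<times>\<^sub>3 M is a bijection turning the M-product into the slicewise
   matrix product, so tensors under the M-product form a monoid whose powers are computed slice
   by slice.  All four equivalences are identities in an arbitrary monoid between an element a,
   an inner inverse x of a and a Drazin inverse d of a.  In a monoid, a has a (necessarily unique)
   Drazin inverse of index k as soon as a^k = u a^(k+1) and a^k = a^(k+1) v, namely u^(k+1) a^k;
   for each slice B such u and v exist because rank B^(k+1) = rank B^k forces the row spaces, and
   (by equality of row and column rank) the column spaces, of B^k and B^(k+1) to agree. *)

locale monoid_npow = monoid f e
  for f :: "'a \<Rightarrow> 'a \<Rightarrow> 'a" (infixl "\<odot>" 70) and e :: 'a +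
  fixes npow :: "'a \<Rightarrow> nat \<Rightarrow> 'a"
  assumes npow_0 [simp]: "npow a 0 = e"
    and npow_Suc: "npow a (Suc n) = npow a n \<odot> a"
begin

lemma npow_add: "npow a (m + n) = npow a m \<odot> npow a n"
  by (induction n) (simp_all add: npow_Suc assoc)

lemma npow_Suc': "npow a (Suc n) = a \<odot> npow a n"
  using npow_add[of a 1 n] by (simp add: npow_Suc)

lemma npow_1 [simp]: "npow a (Suc 0) = a"
  by (simp add: npow_Suc)

lemma commute_npow: "x \<odot> y = y \<odot> x \<Longrightarrow> x \<odot> npow y n = npow y n \<odot> x"
  by (induction n) (simp_all add: npow_Suc, metis assoc)

lemma npow_left_factor_mono:
  assumes "npow a k = u \<odot> npow a (Suc k)" and "k \<le> j"
  shows "npow a j = u \<odot> npow a (Suc j)"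
proof -
  obtain i where j: "j = k + i" using \<open>k \<le> j\<close> le_Suc_ex by blast
  have "npow a j = u \<odot> npow a (Suc k) \<odot> npow a i" using assms(1) by (simp add: j npow_add)
  also have "\<dots> = u \<odot> npow a (Suc j)" by (simp add: j assoc flip: npow_add)
  finally show ?thesis .
qed

lemma npow_right_factor_mono:
  assumes "npow a k = npow a (Suc k) \<odot> v" and "k \<le> j"
  shows "npow a j = npow a (Suc j) \<odot> v"
proof -
  obtain i where j: "j = i + k" using \<open>k \<le> j\<close> le_Suc_ex by (metis add.commute)
  have "npow a j = npow a i \<odot> (npow a (Suc k) \<odot> v)" using assms(1) by (simp add: j npow_add)
  also have "\<dots> = npow a (Suc j) \<odot> v" by (simp add: j flip: assoc npow_add)
  finally show ?thesis .
qed

lemma npow_left_factor_iter: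
  assumes "npow a k = u \<odot> npow a (Suc k)"
  shows "npow a k = npow u j \<odot> npow a (k + j)"
proof (induction j)
  case (Suc j)
  have "npow u (Suc j) \<odot> npow a (k + Suc j) = npow u j \<odot> (u \<odot> npow a (Suc (k + j)))"
    by (simp add: npow_Suc npow_Suc' assoc)
  also have "\<dots> = npow a k"
    using npow_left_factor_mono[OF assms, of "k + j"] Suc.IH by simp
  finally show ?case ..
qed simp

lemma npow_right_factor_iter:
  assumes "npow a k = npow a (Suc k) \<odot> v"
  shows "npow a k = npow a (k + j) \<odot> npow v j"
proof (induction j)
  case (Suc j)
  have "npow a (k + Suc j) \<odot> npow v (Suc j) = (npow a (Suc (k + j)) \<odot> v) \<odot> npow v j"
    by (simp add: npow_Suc' assoc)
  also have "\<dots> = npow a k"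
    using npow_right_factor_mono[OF assms, of "k + j"] Suc.IH by simp
  finally show ?case ..
qed simp

definition is_drazin :: "'a \<Rightarrow> nat \<Rightarrow> 'a \<Rightarrow> bool" where
  "is_drazin a k d \<longleftrightarrow> d \<odot> npow a (Suc k) = npow a k \<and> d \<odot> a \<odot> d = d \<and> a \<odot> d = d \<odot> a"

lemma is_drazin_of_factors:
  assumes l: "npow a k = u \<odot> npow a (Suc k)" and r: "npow a k = npow a (Suc k) \<odot> v"
  shows "is_drazin a k (npow u (Suc k) \<odot> npow a k)"
proof -
  note L = npow_left_factor_iter[OF l] and R = npow_right_factor_iter[OF r]
  define d where "d = npow u (Suc k) \<odot> npow a k"
  have d_right: "d = npow a k \<odot> npow v (Suc k)"
  proof -
    have "d = (npow u (Suc k) \<odot> npow a (k + Suc k)) \<odot> npow v (Suc k)"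
      unfolding d_def by (subst R[of "Suc k"]) (simp add: assoc)
    then show ?thesis using L[of "Suc k"] by simp
  qed
  have middle: "npow u k \<odot> npow a k = npow a k \<odot> npow v k"
  proof -
    have "npow u k \<odot> npow a k = (npow u k \<odot> npow a (k + k)) \<odot> npow v k"
      by (subst R[of k]) (simp add: assoc)
    then show ?thesis using L[of k] by simp
  qed
  have "d \<odot> npow a (Suc k) = npow u (Suc k) \<odot> npow a (k + Suc k)"
    unfolding d_def by (simp add: assoc flip: npow_add)
  then have "d \<odot> npow a (Suc k) = npow a k" using L[of "Suc k"] by simp
  moreover have da: "d \<odot> a = npow u k \<odot> npow a k"
  proof -
    have "d \<odot> a = npow u k \<odot> (u \<odot> npow a (Suc k))" unfolding d_def by (simp add: npow_Suc assoc)
    then show ?thesis using l by simp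
  qed
  moreover have "a \<odot> d = npow a k \<odot> npow v k"
  proof -
    have "a \<odot> d = (npow a (Suc k) \<odot> v) \<odot> npow v k" unfolding d_right by (simp add: npow_Suc' assoc)
    then show ?thesis using r by simp
  qed
  moreover have "d \<odot> a \<odot> d = d"
  proof -
    have "d \<odot> a \<odot> d = (npow u k \<odot> npow a k) \<odot> (npow a k \<odot> npow v (Suc k))"
      using da d_right by metis
    also have "\<dots> = (npow u k \<odot> npow a (k + k)) \<odot> npow v (Suc k)"
      by (simp add: assoc npow_add)
    finally show ?thesis using L[of k] d_right by simp
  qed
  ultimately show ?thesis unfolding is_drazin_def d_def[symmetric] using middle by simp
qed

lemma is_drazin_idempotent_powers:
  assumes "is_drazin a k d"
  shows "npow d (Suc j) \<odot> npow a (Suc j) = d \<odot> a" and "npow a (Suc j) \<odot> npow d (Suc j) = d \<odot> a"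
proof -
  have comm: "a \<odot> d = d \<odot> a" and dad: "d \<odot> a \<odot> d = d" using assms by (auto simp: is_drazin_def)
  have "(d \<odot> a) \<odot> a = a \<odot> (d \<odot> a)" using comm by (simp flip: assoc)
  note comm_da = commute_npow[OF this]
  have idem: "(d \<odot> a) \<odot> (d \<odot> a) = d \<odot> a" using dad by (simp flip: assoc)
  show pow: "npow d (Suc j) \<odot> npow a (Suc j) = d \<odot> a" for j
  proof (induction j)
    case (Suc j)
    have "npow d (Suc (Suc j)) \<odot> npow a (Suc (Suc j)) = npow d (Suc j) \<odot> ((d \<odot> a) \<odot> npow a (Suc j))"
      by (simp add: npow_Suc[of d "Suc j"] npow_Suc'[of a "Suc j"] assoc)
    also have "\<dots> = (npow d (Suc j) \<odot> npow a (Suc j)) \<odot> (d \<odot> a)"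
      by (metis comm_da assoc)
    finally show ?case using Suc idem by simp
  qed simp
  have "npow a (Suc j) \<odot> npow d (Suc j) = npow d (Suc j) \<odot> npow a (Suc j)"
    using commute_npow[OF commute_npow[OF comm, symmetric]] by simp
  then show "npow a (Suc j) \<odot> npow d (Suc j) = d \<odot> a" using pow by simp
qed

lemma is_drazin_unique:
  assumes d1: "is_drazin a k d1" and d2: "is_drazin a k d2"
  shows "d1 = d2"
proof -
  have c1: "a \<odot> d1 = d1 \<odot> a" and dad1: "d1 \<odot> a \<odot> d1 = d1" and p1: "d1 \<odot> npow a (Suc k) = npow a k"
    using d1 by (auto simp: is_drazin_def)
  have c2: "a \<odot> d2 = d2 \<odot> a" and dad2: "d2 \<odot> a \<odot> d2 = d2" and p2: "d2 \<odot> npow a (Suc k) = npow a k"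
    using d2 by (auto simp: is_drazin_def)
  have absorb1: "npow a (Suc k) = (d1 \<odot> a) \<odot> npow a (Suc k)"
    by (metis assoc c1 p1 npow_Suc')
  have absorb2: "npow a (Suc k) = npow a (Suc k) \<odot> (a \<odot> d2)"
    by (metis assoc c2 commute_npow npow_Suc p2)
  have e1: "d1 \<odot> a = (d1 \<odot> a) \<odot> (d2 \<odot> a)"
    using is_drazin_idempotent_powers(1)[OF d1, of k] absorb2 c2 by (metis assoc)
  have e2: "d2 \<odot> a = (d1 \<odot> a) \<odot> (d2 \<odot> a)"
    using is_drazin_idempotent_powers(2)[OF d2, of k] absorb1 by (metis assoc)
  have "d1 = d1 \<odot> (d1 \<odot> a)" using dad1 c1 by (metis assoc)
  also have "\<dots> = (d1 \<odot> a) \<odot> d2" using e1 e2 c2 by (metis assoc)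
  also have "\<dots> = d2" using e1 e2 dad2 by simp
  finally show ?thesis .
qed

lemma inner_inverse_left_eq_iff:
  assumes "a \<odot> x \<odot> a = a"
  shows "x \<odot> a \<odot> d \<odot> a = x \<odot> a \<longleftrightarrow> a \<odot> d \<odot> a = a"
proof
  assume "x \<odot> a \<odot> d \<odot> a = x \<odot> a"
  then have "a \<odot> (x \<odot> a \<odot> d \<odot> a) = a \<odot> x \<odot> a" by (simp add: assoc)
  then show "a \<odot> d \<odot> a = a" using assms by (simp flip: assoc)
qed (simp add: assoc)

lemma reflexive_inverse_right_cancel_iff:
  assumes "d \<odot> a \<odot> d = d"
  shows "x \<odot> a \<odot> d \<odot> a = d \<odot> a \<longleftrightarrow> x \<odot> a \<odot> d = d"
proof
  assume h: "x \<odot> a \<odot> d \<odot> a = d \<odot> a"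
  have "x \<odot> a \<odot> d = x \<odot> a \<odot> (d \<odot> a \<odot> d)" using assms by simp
  also have "\<dots> = (x \<odot> a \<odot> d \<odot> a) \<odot> d" by (simp add: assoc)
  finally show "x \<odot> a \<odot> d = d" using h assms by simp
qed simp

lemma is_drazin_power_sandwich:
  assumes "is_drazin a k d"
  shows "npow a k \<odot> (x \<odot> a \<odot> d) \<odot> npow a k = npow a k \<odot> x \<odot> npow a k"
proof -
  have "a \<odot> d \<odot> npow a k = npow a k"
    using assms unfolding is_drazin_def by (metis assoc npow_Suc')
  then show ?thesis by (metis assoc)
qed

lemma is_drazin_one_drazin_eq_iff_commute:
  assumes "is_drazin a k d" and "a \<odot> x \<odot> a = a"
  shows "x \<odot> a \<odot> d = d \<longleftrightarrow> x \<odot> a \<odot> d \<odot> a = a \<odot> (x \<odot> a \<odot> d)"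
proof
  assume h: "x \<odot> a \<odot> d \<odot> a = a \<odot> (x \<odot> a \<odot> d)"
  have comm: "a \<odot> d = d \<odot> a" and dad: "d \<odot> a \<odot> d = d" using assms(1) by (auto simp: is_drazin_def)
  have "a \<odot> (x \<odot> a \<odot> d) = a \<odot> d" using assms(2) by (simp flip: assoc)
  then show "x \<odot> a \<odot> d = d" using h comm reflexive_inverse_right_cancel_iff[OF dad] by simp
qed (use assms in \<open>simp add: is_drazin_def\<close>)

end

lemma row_mult_vector_matrix: "row i (X ** Y) = row i X v* (Y::'a::comm_semiring_1^'n^'m)"
  by (simp add: vec_eq_iff row_def vector_matrix_mult_def matrix_matrix_mult_def mult.commute)

lemma row_eq_axis_vector_matrix: "row i (Y::'a::comm_semiring_1^'n^'m) = axis i 1 v* Y"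
  by (simp add: vec_eq_iff row_def vector_matrix_mult_def axis_def if_distrib[of "\<lambda>x. x * _"] cong: if_cong)

lemma span_rows_eq_range: "vec.span (rows Y) = range (\<lambda>x. x v* (Y::'a::field^'n^'m))"
proof
  have "vec.subspace (range (\<lambda>x. x v* Y))"
    by (metis image_cong transpose_matrix_vector vec.subspace_UNIV vec.subspace_image)
  moreover have "rows Y \<subseteq> range (\<lambda>x. x v* Y)"
    by (auto simp: rows_def row_eq_axis_vector_matrix)
  ultimately show "vec.span (rows Y) \<subseteq> range (\<lambda>x. x v* Y)"
    by (rule vec.span_minimal[rotated])
  have "x v* Y = (\<Sum>l\<in>UNIV. x $ l *s row l Y)" for x
    by (simp add: vec_eq_iff vector_matrix_mult_def row_def mult.commute)
  moreover have "row l Y \<in> rows Y" for l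
    by (auto simp: rows_def)
  ultimately show "range (\<lambda>x. x v* Y) \<subseteq> vec.span (rows Y)"
    by (metis (no_types, lifting) image_subsetI vec.span_base vec.span_scale vec.span_sum)
qed

lemma rows_mult_subset_span: "rows (X ** Y) \<subseteq> vec.span (rows (Y :: 'a::field^'n^'m))"
  unfolding span_rows_eq_range by (auto simp: rows_def row_mult_vector_matrix)

lemma rows_subset_span_imp_left_factor:
  fixes X :: "'a::field^'n^'m" and Y :: "'a^'n^'k"
  assumes "rows X \<subseteq> vec.span (rows Y)"
  shows "\<exists>Z. X = Z ** Y"
proof -
  have "row i X \<in> rows X" for i
    by (auto simp: rows_def)
  then have "\<forall>i. \<exists>c. row i X = c v* Y"
    using assms unfolding span_rows_eq_range by blast
  then obtain c where c: "\<And>i. row i X = c i v* Y" by metis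
  have "row i X = row i ((\<chi> i. c i) ** Y)" for i
    unfolding c row_mult_vector_matrix by (simp add: row_def)
  then have "X = (\<chi> i. c i) ** Y"
    by (simp add: row_def vec_eq_iff)
  then show ?thesis ..
qed

lemma dim_rows_le_dim_columns_gen:
  fixes A :: "'a::field^'n^'m"
  shows "vec.dim (rows A) \<le> vec.dim (columns A)"
proof -
  (* Writing each column in a basis Bs of the column space and reading the coefficients
     row-wise expresses every row as a combination of card Bs vectors. *)
  obtain Bs where Bs: "Bs \<subseteq> vec.span (columns A)" "vec.independent Bs"
    "vec.span (columns A) \<subseteq> vec.span Bs" "card Bs = vec.dim (vec.span (columns A))"
    using vec.basis_exists by blast
  have fin: "finite Bs" using Bs(2) vec.finiteI_independent by blast
  have "\<forall>j. \<exists>u. column j A = (\<Sum>b\<in>Bs. u b *s b)"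
  proof
    fix j
    have "column j A \<in> vec.span Bs" using Bs(3) vec.span_base[of "column j A" "columns A"]
      by (auto simp: columns_def)
    then show "\<exists>u. column j A = (\<Sum>b\<in>Bs. u b *s b)" using vec.span_finite[OF fin] by auto
  qed
  then obtain U where U: "\<And>j. column j A = (\<Sum>b\<in>Bs. U j b *s b)" by metis
  define w where "w b = (\<chi> j. U j b)" for b
  have "rows A \<subseteq> vec.span (w ` Bs)"
  proof
    fix v assume "v \<in> rows A"
    then obtain i where v: "v = row i A" by (auto simp: rows_def)
    have "v $ j = (\<Sum>b\<in>Bs. (b $ i) *s w b) $ j" for j
    proof -
      have "A $ i $ j = column j A $ i" by (simp add: column_def)
      also have "\<dots> = (\<Sum>b\<in>Bs. U j b * b $ i)" by (subst U) simp
      finally show "v $ j = (\<Sum>b\<in>Bs. (b $ i) *s w b) $ j"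
        by (simp add: v row_def w_def mult.commute)
    qed
    then have "v = (\<Sum>b\<in>Bs. (b $ i) *s w b)" by (simp add: vec_eq_iff)
    also have "\<dots> \<in> vec.span (w ` Bs)"
      by (intro vec.span_sum vec.span_scale vec.span_base) auto
    finally show "v \<in> vec.span (w ` Bs)" .
  qed
  then have "vec.dim (rows A) \<le> card (w ` Bs)" using fin by (intro vec.dim_le_card) auto
  also have "\<dots> \<le> card Bs" using fin by (rule card_image_le)
  also have "\<dots> = vec.dim (columns A)" using Bs(4) by simp
  finally show ?thesis .
qed

lemma rank_transpose_gen: "rank (transpose (A::'a::field^'n^'m)) = rank A"
  unfolding row_rank_def_gen
  using dim_rows_le_dim_columns_gen[of A] dim_rows_le_dim_columns_gen[of "transpose A"] by simp

interpretation matrix_monoid: monoid_npow "(**)" "mat 1 :: complex^'n^'n" mpow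
  by unfold_locales (simp_all add: matrix_mul_assoc)

lemma mpow_transpose: "mpow (transpose B) m = transpose (mpow B m)"
proof (induction m)
  case (Suc m)
  then show ?case by (metis matrix_monoid.npow_Suc' matrix_monoid.npow_Suc matrix_transpose_mul)
qed simp

lemma rank_mpow_Suc_le: "rank (mpow B (Suc j)) \<le> rank (mpow B j)"
proof -
  have "vec.dim (rows (mpow B (Suc j))) \<le> vec.dim (vec.span (rows (mpow B j)))"
    unfolding matrix_monoid.npow_Suc' by (rule vec.dim_subset[OF rows_mult_subset_span])
  then show ?thesis unfolding row_rank_def_gen by simp
qed

lemma ex_rank_mpow_Suc_eq: "\<exists>j. rank (mpow B (Suc j)) = rank (mpow B j)"
proof (rule ccontr)
  assume "\<nexists>j. rank (mpow B (Suc j)) = rank (mpow B j)"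
  then have decr: "rank (mpow B (Suc j)) < rank (mpow B j)" for j
    using rank_mpow_Suc_le[of B j] by (simp add: order_less_le)
  have "rank (mpow B j) + j \<le> rank (mpow B 0)" for j
  proof (induction j)
    case (Suc j)
    then show ?case using decr[of j] by simp
  qed simp
  from this[of "Suc (rank (mpow B 0))"] show False by simp
qed

lemma rank_mpow_Suc_mind: "rank (mpow B (Suc (mind B))) = rank (mpow B (mind B))"
  unfolding mind_def by (rule LeastI_ex[OF ex_rank_mpow_Suc_eq])

lemma mpow_left_factor_of_rank_eq:
  assumes "rank (mpow B (Suc j)) = rank (mpow B j)"
  shows "\<exists>Z. mpow B j = Z ** mpow B (Suc j)"
proof -
  let ?S1 = "vec.span (rows (mpow B (Suc j)))" and ?S0 = "vec.span (rows (mpow B j))"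
  have "?S1 \<subseteq> ?S0"
    unfolding matrix_monoid.npow_Suc' by (rule vec.span_minimal[OF rows_mult_subset_span vec.subspace_span])
  moreover have "vec.dim ?S0 \<le> vec.dim ?S1"
    using assms unfolding row_rank_def_gen by simp
  ultimately have "?S1 = ?S0"
    by (intro vec.subspace_dim_equal) auto
  then have "rows (mpow B j) \<subseteq> ?S1"
    using vec.span_superset by blast
  then show ?thesis by (rule rows_subset_span_imp_left_factor)
qed

lemma mpow_left_factor:
  assumes "mind B \<le> k"
  shows "\<exists>Z. mpow B k = Z ** mpow B (Suc k)"
  using mpow_left_factor_of_rank_eq[OF rank_mpow_Suc_mind] matrix_monoid.npow_left_factor_mono assms
  by blast

lemma mind_transpose: "mind (transpose B) = mind B"
  unfolding mind_def mpow_transpose rank_transpose_gen ..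

lemma mpow_right_factor:
  assumes "mind B \<le> k"
  shows "\<exists>Y. mpow B k = mpow B (Suc k) ** Y"
proof -
  obtain Z where "mpow (transpose B) k = Z ** mpow (transpose B) (Suc k)"
    using mpow_left_factor[of "transpose B" k] assms by (auto simp: mind_transpose)
  then have "mpow B k = mpow B (Suc k) ** transpose Z"
    by (metis matrix_transpose_mul mpow_transpose transpose_transpose)
  then show ?thesis ..
qed

lemma that_that: "that M (that N C) = that (M ** N) C"
proof -
  have "(\<Sum>l\<in>UNIV. M $ k $ l * (\<Sum>m\<in>UNIV. N $ l $ m * C $ m $ i $ j)) =
        (\<Sum>m\<in>UNIV. (\<Sum>l\<in>UNIV. M $ k $ l * N $ l $ m) * C $ m $ i $ j)" for k i j
    by (simp add: sum_distrib_left sum_distrib_right mult.assoc) (rule sum.swap)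
  then show ?thesis by (simp add: that_def matrix_matrix_mult_def vec_eq_iff)
qed

lemma that_mat_1 [simp]: "that (mat 1) C = C"
  by (simp add: that_def mat_def vec_eq_iff if_distrib[of "\<lambda>x. x * _"] cong: if_cong)

lemma that_inj:
  fixes M :: "complex ^ 'p::finite ^ 'p" and C D :: "('n::finite, 'p) tensor"
  assumes "invertible M" and "that M C = that M D"
  shows "C = D"
proof -
  obtain N where "N ** M = mat 1" using assms(1) by (auto simp: invertible_def)
  then have "that N (that M C) = C" for C :: "('n::finite, 'p) tensor"
    by (simp add: that_that)
  then show ?thesis by (metis assms(2))
qed

lemma tensor_eqI:
  assumes "invertible M" and "\<And>k. that M C $ k = that M D $ k"
  shows "C = D"
  by (rule that_inj[OF assms(1)]) (simp add: vec_eq_iff assms(2))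

lemma that_surj:
  assumes "invertible M"
  obtains C where "that M C = X"
proof -
  obtain N where "M ** N = mat 1" using assms by (auto simp: invertible_def)
  then have "that M (that N X) = X" by (simp add: that_that)
  then show ?thesis by (rule that)
qed

lemma that_the_slices:
  assumes "invertible M"
  shows "that M (THE E. \<forall>k. that M E $ k = F k) $ k = F k"
proof -
  obtain C where C: "that M C = (\<chi> k. F k)" using that_surj[OF assms] .
  have "(THE E. \<forall>k. that M E $ k = F k) = C"
  proof (rule the_equality)
    fix E assume "\<forall>k. that M E $ k = F k"
    then show "E = C" by (intro tensor_eqI[OF assms]) (simp add: C)
  qed (simp add: C)
  then show ?thesis by (simp add: C)
qed

lemma that_mprod: "invertible M \<Longrightarrow> that M (mprod M C D) $ k = that M C $ k ** that M D $ k"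
  unfolding mprod_def by (rule that_the_slices)

lemma that_tid: "invertible M \<Longrightarrow> that M (tid M) $ k = mat 1"
  unfolding tid_def by (rule that_the_slices)

lemma that_tpow: "invertible M \<Longrightarrow> that M (tpow M A m) $ k = mpow (that M A $ k) m"
  by (induction m) (simp_all add: that_tid that_mprod)

lemma monoid_npow_mprod:
  assumes "invertible M"
  shows "monoid_npow (mprod M) (tid M) (tpow M)"
  by unfold_locales
    (auto intro!: tensor_eqI[OF assms] simp: that_mprod that_tid assms matrix_mul_assoc)

lemma mind_slice_le_tind: "mind (that M A $ k) \<le> tind M A"
  unfolding tind_def by (rule Max_ge) auto

lemma tpow_left_factor:
  assumes "invertible M" and "tind M A \<le> j"
  shows "\<exists>U. tpow M A j = mprod M U (tpow M A (Suc j))"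
proof -
  have "\<forall>k. \<exists>Z. mpow (that M A $ k) j = Z ** mpow (that M A $ k) (Suc j)"
    using mpow_left_factor mind_slice_le_tind assms(2) order_trans by blast
  then obtain Z where Z: "\<And>k. mpow (that M A $ k) j = Z k ** mpow (that M A $ k) (Suc j)"
    by metis
  obtain U where "that M U = (\<chi> k. Z k)" using that_surj[OF assms(1)] .
  then have "tpow M A j = mprod M U (tpow M A (Suc j))"
    by (intro tensor_eqI[OF assms(1)]) (simp only: that_mprod that_tpow assms(1) Z vec_lambda_beta)
  then show ?thesis ..
qed

lemma tpow_right_factor:
  assumes "invertible M" and "tind M A \<le> j"
  shows "\<exists>V. tpow M A j = mprod M (tpow M A (Suc j)) V"
proof -
  have "\<forall>k. \<exists>Y. mpow (that M A $ k) j = mpow (that M A $ k) (Suc j) ** Y"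
    using mpow_right_factor mind_slice_le_tind assms(2) order_trans by blast
  then obtain Y where Y: "\<And>k. mpow (that M A $ k) j = mpow (that M A $ k) (Suc j) ** Y k"
    by metis
  obtain V where "that M V = (\<chi> k. Y k)" using that_surj[OF assms(1)] .
  then have "tpow M A j = mprod M (tpow M A (Suc j)) V"
    by (intro tensor_eqI[OF assms(1)]) (simp only: that_mprod that_tpow assms(1) Y vec_lambda_beta)
  then show ?thesis ..
qed

lemma is_drazin_tdrazin:
  assumes "invertible M"
  shows "monoid_npow.is_drazin (mprod M) (tpow M) A (tind M A) (tdrazin M A)"
proof -
  interpret monoid_npow "mprod M" "tid M" "tpow M"
    using monoid_npow_mprod[OF assms] .
  obtain U V where "tpow M A (tind M A) = mprod M U (tpow M A (Suc (tind M A)))"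
    and "tpow M A (tind M A) = mprod M (tpow M A (Suc (tind M A))) V"
    using tpow_left_factor[OF assms] tpow_right_factor[OF assms] by blast
  then have "is_drazin A (tind M A) (mprod M (tpow M U (Suc (tind M A))) (tpow M A (tind M A)))"
    by (rule is_drazin_of_factors)
  then have "\<exists>!d. is_drazin A (tind M A) d"
    using is_drazin_unique by blast
  then show "is_drazin A (tind M A) (tdrazin M A)"
    unfolding tdrazin_def is_drazin_def[symmetric] by (rule theI')
qed

theorem theorem3p8:
  fixes M :: "complex ^ 'p::finite ^ 'p"
    and A Am :: "('n::finite, 'p) tensor"
    and k :: nat
  assumes "invertible M"
    and "k = tind M A"
    and "Am \<in> tinner M A"
  shows "(mprod M (t1D M A Am) A = mprod M Am A \<longleftrightarrow>
            mprod M (mprod M A (tdrazin M A)) A = A)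
       \<and> (mprod M (t1D M A Am) A = mprod M (tdrazin M A) A \<longleftrightarrow> t1D M A Am = tdrazin M A)
       \<and> (mprod M (mprod M (tpow M A k) Am) (tpow M A k) = tpow M A k \<longleftrightarrow>
            mprod M (mprod M (tpow M A k) (t1D M A Am)) (tpow M A k) = tpow M A k)
       \<and> (t1D M A Am = tdrazin M A \<longleftrightarrow> mprod M (t1D M A Am) A = mprod M A (t1D M A Am))"
proof -
  interpret monoid_npow "mprod M" "tid M" "tpow M"
    using monoid_npow_mprod[OF assms(1)] .
  have drazin: "is_drazin A k (tdrazin M A)"
    using is_drazin_tdrazin[OF assms(1)] assms(2) by simp
  then have dad: "mprod M (mprod M (tdrazin M A) A) (tdrazin M A) = tdrazin M A"
    by (simp add: is_drazin_def)
  have inner: "mprod M (mprod M A Am) A = A"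
    using assms(3) by (simp add: tinner_def)
  show ?thesis
    unfolding t1D_def
    by (intro conjI inner_inverse_left_eq_iff[OF inner] reflexive_inverse_right_cancel_iff[OF dad]
        is_drazin_one_drazin_eq_iff_commute[OF drazin inner])
      (simp add: is_drazin_power_sandwich[OF drazin])
qed

end
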